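(* Let $N\ge 1$ and let $T:M(N)\to M(N)$ be a non-zero linear map, and let $T^*$ be its adjoint with respect to the Hilbert–Schmidt inner product $\langle A,B\rangle_{\mathrm{HS}}=\operatorname{tr}(A^*B)$. Then $h(T)=h(T^* )$.
   Context: $M(N)$ is the space of $N\times N$ complex matrices. For $1\le p<\infty$, $\|A\|_p$ is the Schatten-$p$ norm $(\sum_i\sigma_i(A)^p)^{1/p}$ and $\|A\|_\infty$ is the operator norm; $\|T\|_{p\to p}=\sup_{X\ne0}\|T(X)\|_p/\|X\|_p$. The height of a non-zero linear map $T:M(N)\to M(N)$ is $h(T)=\sqrt{\|T\|_{1\to1}\|T\|_{\infty\to\infty}}/\|T\|_{2\to2}$. *)

theory Defs
  imports "Jordan_Normal_Form.Schur_Decomposition" "Jordan_Normal_Form.Char_Poly"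
    "HOL-Computational_Algebra.Fundamental_Theorem_Algebra"
begin

text \<open>Matrices in M(N) are complex matrices in carrier_mat N N.
  A^* is mat_adjoint A (conjugate transpose).\<close>

definition singular_values :: "complex mat \<Rightarrow> real multiset" where
  "singular_values A = image_mset (\<lambda>z. sqrt (Re z)) (proots (char_poly (mat_adjoint A * A)))"

definition schatten_norm :: "real \<Rightarrow> complex mat \<Rightarrow> real" where
  "schatten_norm p A = (\<Sum>s\<in>#singular_values A. s powr p) powr (1 / p)"

definition vec_norm2 :: "complex vec \<Rightarrow> real" where
  "vec_norm2 x = sqrt (\<Sum>i<dim_vec x. (cmod (x $ i))\<^sup>2)"

definition op_norm :: "complex mat \<Rightarrow> real" where
  "op_norm A = Sup {vec_norm2 (A *\<^sub>v x) / vec_norm2 x | x. x \<in> carrier_vec (dim_col A) \<and> x \<noteq> 0\<^sub>v (dim_col A)}"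

definition induced_norm :: "nat \<Rightarrow> (complex mat \<Rightarrow> real) \<Rightarrow> (complex mat \<Rightarrow> complex mat) \<Rightarrow> real" where
  "induced_norm N nrm T = Sup {nrm (T X) / nrm X | X. X \<in> carrier_mat N N \<and> X \<noteq> 0\<^sub>m N N}"

definition height :: "nat \<Rightarrow> (complex mat \<Rightarrow> complex mat) \<Rightarrow> real" where
  "height N T = sqrt (induced_norm N (schatten_norm 1) T * induced_norm N op_norm T)
                 / induced_norm N (schatten_norm 2) T"

definition mat_trace :: "complex mat \<Rightarrow> complex" where
  "mat_trace A = (\<Sum>i<dim_row A. A $$ (i, i))"

definition hs_inner :: "complex mat \<Rightarrow> complex mat \<Rightarrow> complex" where
  "hs_inner A B = mat_trace (mat_adjoint A * B)"

definition linear_on_M :: "nat \<Rightarrow> (complex mat \<Rightarrow> complex mat) \<Rightarrow> bool" where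
  "linear_on_M N T \<longleftrightarrow>
     (\<forall>A\<in>carrier_mat N N. T A \<in> carrier_mat N N) \<and>
     (\<forall>A\<in>carrier_mat N N. \<forall>B\<in>carrier_mat N N. T (A + B) = T A + T B) \<and>
     (\<forall>c. \<forall>A\<in>carrier_mat N N. T (c \<cdot>\<^sub>m A) = c \<cdot>\<^sub>m T A)"

definition is_hs_adjoint :: "nat \<Rightarrow> (complex mat \<Rightarrow> complex mat) \<Rightarrow> (complex mat \<Rightarrow> complex mat) \<Rightarrow> bool" where
  "is_hs_adjoint N T S \<longleftrightarrow>
     (\<forall>A\<in>carrier_mat N N. S A \<in> carrier_mat N N) \<and>
     (\<forall>A\<in>carrier_mat N N. \<forall>B\<in>carrier_mat N N. hs_inner A (T B) = hs_inner (S A) B)"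

end

theory Submission
  imports Defs "HOL-Analysis.L2_Norm" "Jordan_Normal_Form.Spectral_Radius"
begin

text \<open>Call two norms \<open>\<parallel>\<cdot>\<parallel>\<close> and \<open>\<parallel>\<cdot>\<parallel>'\<close> on \<open>M(N)\<close> dual if \<open>|\<langle>A, B\<rangle>| \<le> \<parallel>A\<parallel> \<parallel>B\<parallel>'\<close> for the
  Hilbert--Schmidt pairing, with equality attainable in either argument. Then
  \<open>\<parallel>T\<^sup>* X\<parallel> = max {|\<langle>B, T\<^sup>* X\<rangle>|. \<parallel>B\<parallel>' \<le> 1} = max {|\<langle>T B, X\<rangle>|. \<parallel>B\<parallel>' \<le> 1} \<le> \<parallel>T\<parallel>' \<parallel>X\<parallel>\<close>
  and symmetrically, so the norm of \<open>T\<^sup>*\<close> induced by \<open>\<parallel>\<cdot>\<parallel>\<close> equals the norm of \<open>T\<close> induced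
  by \<open>\<parallel>\<cdot>\<parallel>'\<close>. The trace norm and the operator norm are dual to each other, and the Schatten
  2-norm, which is the Frobenius norm, is self-dual. Hence passing from \<open>T\<close> to \<open>T\<^sup>*\<close> keeps the
  \<open>2 \<rightarrow> 2\<close> norm and exchanges the \<open>1 \<rightarrow> 1\<close> and \<open>\<infinity> \<rightarrow> \<infinity>\<close> norms, which leaves the height
  unchanged. Both Schatten dualities are read off a singular value decomposition, obtained from
  the spectral theorem for \<open>A\<^sup>* A\<close>.\<close>

abbreviation adj :: "complex mat \<Rightarrow> complex mat" where
  "adj \<equiv> mat_adjoint"

lemma dim_mat_adjoint [simp]: "dim_row (adj A) = dim_col A" "dim_col (adj A) = dim_row A"
  unfolding mat_adjoint_def by auto

lemma mat_adjoint_carrier [simp, intro]: "A \<in> carrier_mat n m \<Longrightarrow> adj A \<in> carrier_mat m n"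
  unfolding carrier_mat_def by simp

lemma index_mat_adjoint [simp]:
  "i < dim_col A \<Longrightarrow> j < dim_row A \<Longrightarrow> adj A $$ (i, j) = cnj (A $$ (j, i))"
  unfolding mat_adjoint_def by (subst mat_of_rows_index) auto

lemma mat_adjoint_adjoint [simp]: "adj (adj A) = A"
  by (rule eq_matI) auto

lemma index_mult_mat_sum:
  "A \<in> carrier_mat n k \<Longrightarrow> B \<in> carrier_mat k m \<Longrightarrow> i < n \<Longrightarrow> j < m \<Longrightarrow>
    (A * B) $$ (i, j) = (\<Sum>l<k. A $$ (i, l) * B $$ (l, j))"
  by (auto simp: scalar_prod_def lessThan_atLeast0 intro!: sum.cong)

lemma index_mult_mat_vec_sum:
  "A \<in> carrier_mat n k \<Longrightarrow> x \<in> carrier_vec k \<Longrightarrow> i < n \<Longrightarrow>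
    (A *\<^sub>v x) $ i = (\<Sum>l<k. A $$ (i, l) * x $ l)"
  by (auto simp: scalar_prod_def lessThan_atLeast0 intro!: sum.cong)

lemma mat_adjoint_mult:
  assumes A: "A \<in> carrier_mat n k" and B: "B \<in> carrier_mat k m"
  shows "adj (A * B) = adj B * adj A"
proof (rule eq_matI)
  fix i j assume "i < dim_row (adj B * adj A)" "j < dim_col (adj B * adj A)"
  then have i: "i < m" and j: "j < n" using A B by auto
  have "adj (A * B) $$ (i, j) = cnj ((A * B) $$ (j, i))" using i j A B by simp
  also have "\<dots> = (\<Sum>l<k. cnj (A $$ (j, l)) * cnj (B $$ (l, i)))"
    using i j A B by (subst index_mult_mat_sum[of _ n k _ m]) auto
  also have "\<dots> = (adj B * adj A) $$ (i, j)"
    using i j A B by (subst index_mult_mat_sum[of _ m k _ n]) (auto simp: mult.commute)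
  finally show "adj (A * B) $$ (i, j) = (adj B * adj A) $$ (i, j)" .
qed (use A B in auto)

lemma index_mat_adjoint_mult:
  assumes "A \<in> carrier_mat n m" "B \<in> carrier_mat n k" "i < m" "j < k"
  shows "(adj A * B) $$ (i, j) = col B j \<bullet>c col A i"
  using assms by (auto simp: index_mult_mat_sum[of _ m n _ k] scalar_prod_def lessThan_atLeast0
      mult.commute intro!: sum.cong)

lemma mat_adjoint_four_block_mat:
  assumes "A \<in> carrier_mat n1 m1" "B \<in> carrier_mat n1 m2"
    and "C \<in> carrier_mat n2 m1" "D \<in> carrier_mat n2 m2"
  shows "adj (four_block_mat A B C D) = four_block_mat (adj A) (adj C) (adj B) (adj D)"
  by (rule eq_matI) (use assms in auto)

lemma cnj_index_hermitian:
  assumes "adj H = H" "H \<in> carrier_mat n n" "i < n" "j < n"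
  shows "cnj (H $$ (j, i)) = H $$ (i, j)"
proof -
  have "adj H $$ (i, j) = cnj (H $$ (j, i))" using assms(2-4) by simp
  then show ?thesis using assms(1) by simp
qed

definition unitary_mat :: "nat \<Rightarrow> complex mat \<Rightarrow> bool" where
  "unitary_mat n U \<longleftrightarrow> U \<in> carrier_mat n n \<and> adj U * U = 1\<^sub>m n"

lemma unitary_mat_one: "unitary_mat n (1\<^sub>m n)"
proof -
  have "adj (1\<^sub>m n) = 1\<^sub>m n" by (rule eq_matI) auto
  then show ?thesis unfolding unitary_mat_def by simp
qed

lemma unitary_matD:
  assumes "unitary_mat n U"
  shows "U \<in> carrier_mat n n" "adj U * U = 1\<^sub>m n" "U * adj U = 1\<^sub>m n"
  using assms mat_mult_left_right_inverse[of "adj U" n U] unfolding unitary_mat_def by auto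

lemma unitary_mat_adjoint: "unitary_mat n U \<Longrightarrow> unitary_mat n (adj U)"
  using unitary_matD[of n U] unfolding unitary_mat_def by auto

lemma unitary_mat_mult:
  assumes U: "unitary_mat n U" and V: "unitary_mat n V"
  shows "unitary_mat n (U * V)"
proof -
  note U' = unitary_matD[OF U] and V' = unitary_matD[OF V]
  have "adj (U * V) * (U * V) = adj V * ((adj U * U) * V)"
    using U'(1) V'(1) by (simp add: mat_adjoint_mult[of _ n n _ n] assoc_mult_mat[of _ n n _ n _ n])
  also have "\<dots> = 1\<^sub>m n" using U'(2) V' by simp
  finally show ?thesis using U'(1) V'(1) unfolding unitary_mat_def by simp
qed

lemma vec_norm2_L2_set: "vec_norm2 x = L2_set (\<lambda>k. cmod (x $ k)) {..<dim_vec x}"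
  unfolding vec_norm2_def L2_set_def by simp

lemma vec_norm2_nonneg [simp]: "0 \<le> vec_norm2 x"
  unfolding vec_norm2_L2_set by simp

lemma vec_norm2_zero_vec [simp]: "vec_norm2 (0\<^sub>v n) = 0"
  unfolding vec_norm2_def by simp

lemma power2_vec_norm2: "(vec_norm2 x)\<^sup>2 = (\<Sum>k<dim_vec x. (cmod (x $ k))\<^sup>2)"
  unfolding vec_norm2_def by (simp add: sum_nonneg)

lemma vec_norm2_eq_0_iff: "x \<in> carrier_vec n \<Longrightarrow> vec_norm2 x = 0 \<longleftrightarrow> x = 0\<^sub>v n"
  unfolding vec_norm2_L2_set by (auto simp: L2_set_eq_0_iff)

lemma vec_norm2_pos: "x \<in> carrier_vec n \<Longrightarrow> x \<noteq> 0\<^sub>v n \<Longrightarrow> 0 < vec_norm2 x"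
  using vec_norm2_eq_0_iff vec_norm2_nonneg by (metis order_le_less)

lemma vec_norm2_smult: "vec_norm2 (c \<cdot>\<^sub>v x) = cmod c * vec_norm2 x"
proof -
  have "L2_set (\<lambda>k. cmod ((c \<cdot>\<^sub>v x) $ k)) {..<dim_vec x} =
      L2_set (\<lambda>k. cmod c * cmod (x $ k)) {..<dim_vec x}"
    by (rule L2_set_cong) (auto simp: norm_mult)
  then show ?thesis unfolding vec_norm2_L2_set by (simp add: L2_set_right_distrib)
qed

lemma cscalar_prod_self: "x \<bullet>c x = complex_of_real ((vec_norm2 x)\<^sup>2)"
  unfolding power2_vec_norm2 of_real_sum
  by (simp add: scalar_prod_def complex_norm_square lessThan_atLeast0 del: of_real_power)

lemma norm_sum_cnj_mult_le:
  "cmod (\<Sum>i\<in>I. cnj (x i) * y i) \<le> L2_set (\<lambda>i. cmod (x i)) I * L2_set (\<lambda>i. cmod (y i)) I"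
proof -
  have "cmod (\<Sum>i\<in>I. cnj (x i) * y i) \<le> (\<Sum>i\<in>I. \<bar>cmod (x i)\<bar> * \<bar>cmod (y i)\<bar>)"
    by (rule order.trans[OF norm_sum]) (simp add: norm_mult)
  also have "\<dots> \<le> L2_set (\<lambda>i. cmod (x i)) I * L2_set (\<lambda>i. cmod (y i)) I"
    by (rule L2_set_mult_ineq)
  finally show ?thesis .
qed

lemma norm_cscalar_prod_le:
  assumes "dim_vec y = dim_vec x"
  shows "cmod (x \<bullet>c y) \<le> vec_norm2 x * vec_norm2 y"
proof -
  have "x \<bullet>c y = (\<Sum>k<dim_vec x. cnj (y $ k) * x $ k)"
    using assms by (simp add: scalar_prod_def lessThan_atLeast0 mult.commute)
  then show ?thesis
    using norm_sum_cnj_mult_le[where x = "\<lambda>k. y $ k" and y = "\<lambda>k. x $ k" and I = "{..<dim_vec x}"]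
      assms by (simp add: vec_norm2_L2_set mult.commute)
qed

lemma cscalar_prod_orthogonal_cols:
  assumes "M \<in> carrier_mat n m" "diagonal_mat (adj M * M)" "i < m" "j < m"
  shows "col M j \<bullet>c col M i = (if i = j then complex_of_real ((vec_norm2 (col M i))\<^sup>2) else 0)"
  using assms index_mat_adjoint_mult[OF assms(1,1,3,4)]
  by (auto simp: diagonal_mat_def cscalar_prod_self simp del: index_mult_mat(1) of_real_power)

lemma power2_vec_norm2_mult_orthogonal_cols:
  assumes M: "M \<in> carrier_mat n m" and D: "diagonal_mat (adj M * M)" and y: "y \<in> carrier_vec m"
  shows "(vec_norm2 (M *\<^sub>v y))\<^sup>2 = (\<Sum>i<m. (vec_norm2 (col M i))\<^sup>2 * (cmod (y $ i))\<^sup>2)"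
proof -
  have "complex_of_real ((vec_norm2 (M *\<^sub>v y))\<^sup>2) =
      (\<Sum>k<n. (\<Sum>i<m. M $$ (k, i) * y $ i) * cnj (\<Sum>j<m. M $$ (k, j) * y $ j))"
    unfolding cscalar_prod_self[symmetric] using M y
    by (simp add: scalar_prod_def lessThan_atLeast0 index_mult_mat_vec_sum del: index_mult_mat_vec)
  also have "\<dots> = (\<Sum>k<n. \<Sum>i<m. \<Sum>j<m. (M $$ (k, i) * y $ i) * cnj (M $$ (k, j) * y $ j))"
    by (simp add: sum_product)
  also have "\<dots> = (\<Sum>i<m. \<Sum>j<m. \<Sum>k<n. (M $$ (k, i) * y $ i) * cnj (M $$ (k, j) * y $ j))"
    by (subst sum.swap) (simp add: sum.swap[of _ "{..<n}"])
  also have "\<dots> = (\<Sum>i<m. \<Sum>j<m. y $ i * cnj (y $ j) * (col M i \<bullet>c col M j))"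
    using M by (intro sum.cong refl)
      (simp add: scalar_prod_def lessThan_atLeast0 sum_distrib_left mult_ac)
  also have "\<dots> = (\<Sum>i<m. y $ i * cnj (y $ i) * complex_of_real ((vec_norm2 (col M i))\<^sup>2))"
    by (intro sum.cong refl)
      (simp add: cscalar_prod_orthogonal_cols[OF M D] if_distrib cong: if_cong)
  also have "\<dots> = complex_of_real (\<Sum>i<m. (vec_norm2 (col M i))\<^sup>2 * (cmod (y $ i))\<^sup>2)"
    by (simp add: complex_norm_square mult_ac del: of_real_power)
  finally show ?thesis by (simp only: of_real_eq_iff)
qed

lemma vec_norm2_mult_orthogonal_cols_le:
  assumes M: "M \<in> carrier_mat n m" "diagonal_mat (adj M * M)" and y: "y \<in> carrier_vec m"
    and c: "0 \<le> c" "\<And>i. i < m \<Longrightarrow> vec_norm2 (col M i) \<le> c"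
  shows "vec_norm2 (M *\<^sub>v y) \<le> c * vec_norm2 y"
proof -
  have "(vec_norm2 (M *\<^sub>v y))\<^sup>2 = (\<Sum>i<m. (vec_norm2 (col M i))\<^sup>2 * (cmod (y $ i))\<^sup>2)"
    by (rule power2_vec_norm2_mult_orthogonal_cols[OF M y])
  also have "\<dots> \<le> (\<Sum>i<m. c\<^sup>2 * (cmod (y $ i))\<^sup>2)"
  proof (rule sum_mono)
    fix i assume "i \<in> {..<m}"
    then have "(vec_norm2 (col M i))\<^sup>2 \<le> c\<^sup>2" using c(2) by (intro power_mono) auto
    then show "(vec_norm2 (col M i))\<^sup>2 * (cmod (y $ i))\<^sup>2 \<le> c\<^sup>2 * (cmod (y $ i))\<^sup>2"
      by (rule mult_right_mono) simp
  qed
  also have "\<dots> = (c * vec_norm2 y)\<^sup>2"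
    unfolding power_mult_distrib power2_vec_norm2 sum_distrib_left using y by simp
  finally show ?thesis by (rule power2_le_imp_le) (use c(1) in simp)
qed

lemma vec_norm2_col_unitary:
  assumes U: "unitary_mat n U" and i: "i < n"
  shows "vec_norm2 (col U i) = 1"
proof -
  have "complex_of_real ((vec_norm2 (col U i))\<^sup>2) = 1"
    using index_mat_adjoint_mult[of U n n U n i i] unitary_matD[OF U] i
    by (simp add: cscalar_prod_self del: index_mult_mat(1) of_real_power)
  then have "(vec_norm2 (col U i))\<^sup>2 = 1" by (simp only: of_real_eq_1_iff)
  then show ?thesis using vec_norm2_nonneg[of "col U i"] by (auto simp: power2_eq_1_iff)
qed

lemma vec_norm2_mult_unitary:
  assumes U: "unitary_mat n U" and y: "y \<in> carrier_vec n"
  shows "vec_norm2 (U *\<^sub>v y) = vec_norm2 y"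
proof -
  have "diagonal_mat (adj U * U)" using unitary_matD(2)[OF U] by (simp add: diagonal_mat_def)
  then have "(vec_norm2 (U *\<^sub>v y))\<^sup>2 = (\<Sum>i<n. (vec_norm2 (col U i))\<^sup>2 * (cmod (y $ i))\<^sup>2)"
    by (rule power2_vec_norm2_mult_orthogonal_cols[OF unitary_matD(1)[OF U] _ y])
  also have "\<dots> = (vec_norm2 y)\<^sup>2"
    using y vec_norm2_col_unitary[OF U] by (simp add: power2_vec_norm2[of y])
  finally show ?thesis by simp
qed

section \<open>The spectral theorem for Hermitian matrices\<close>

lemma corthogonal_list_with_hd:
  fixes v :: "complex vec"
  assumes v: "v \<in> carrier_vec n" and v0: "v \<noteq> 0\<^sub>v n"
  obtains ws where "corthogonal ws" "set ws \<subseteq> carrier_vec n" "length ws = n" "hd ws = v"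
proof -
  interpret cof_vec_space n "TYPE(complex)" .
  define b where "b = basis_completion v"
  from basis_completion[OF v v0, folded b_def]
  have b: "set b \<subseteq> carrier_vec n" "distinct b" "\<not> lin_dep (set b)" "length b = n" "hd b = v"
    by auto
  then obtain vs where "b = v # vs" by (cases b) (use v v0 in auto)
  then have "hd (gram_schmidt n b) = v" using v by simp
  with gram_schmidt_result[OF b(1-3) refl] b(4) show ?thesis using that by auto
qed

lemma unitary_mat_of_corthogonal:
  assumes ws: "corthogonal ws" "set ws \<subseteq> carrier_vec n" "length ws = n"
  shows "unitary_mat n (mat_of_cols n (map (\<lambda>w. complex_of_real (1 / vec_norm2 w) \<cdot>\<^sub>v w) ws))"
    (is "unitary_mat n ?W")
proof -
  have wsc: "ws ! j \<in> carrier_vec n" if "j < n" for j using ws that by auto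
  have pos: "0 < vec_norm2 (ws ! j)" if j: "j < n" for j
  proof -
    have "ws ! j \<bullet>c ws ! j \<noteq> 0" using corthogonalD[OF ws(1), of j j] ws(3) j by auto
    then have "ws ! j \<noteq> 0\<^sub>v n" using wsc[OF j] by auto
    then show ?thesis by (rule vec_norm2_pos[OF wsc[OF j]])
  qed
  have "(adj ?W * ?W) $$ (i, j) = 1\<^sub>m n $$ (i, j)" if i: "i < n" and j: "j < n" for i j
  proof -
    have "(adj ?W * ?W) $$ (i, j) =
        (ws ! j \<bullet>c ws ! i) / complex_of_real (vec_norm2 (ws ! i) * vec_norm2 (ws ! j))"
      using i j ws(3) wsc[OF i] wsc[OF j]
      by (subst index_mat_adjoint_mult[of _ n n]) (auto simp: conjugate_smult_vec)
    also have "\<dots> = 1\<^sub>m n $$ (i, j)"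
      using corthogonalD[OF ws(1), of j i] ws(3) i j pos[OF i]
      by (auto simp: cscalar_prod_self power2_eq_square)
    finally show ?thesis .
  qed
  then show ?thesis unfolding unitary_mat_def using ws(3) by auto
qed

lemma unitary_mat_with_first_col:
  assumes v: "v \<in> carrier_vec n" and v1: "vec_norm2 v = 1"
  obtains W where "unitary_mat n W" "col W 0 = v"
proof -
  have "v \<noteq> 0\<^sub>v n" using v1 vec_norm2_eq_0_iff[OF v] by auto
  then obtain ws where ws: "corthogonal ws" "set ws \<subseteq> carrier_vec n" "length ws = n" "hd ws = v"
    using corthogonal_list_with_hd[OF v] by blast
  have "n \<noteq> 0" using v \<open>v \<noteq> 0\<^sub>v n\<close> by auto
  then have "ws ! 0 = v" using ws(3,4) by (cases ws) auto
  then have "col (mat_of_cols n (map (\<lambda>w. complex_of_real (1 / vec_norm2 w) \<cdot>\<^sub>v w) ws)) 0 = v"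
    using ws(2,3) \<open>n \<noteq> 0\<close> v v1 by (subst col_mat_of_cols) auto
  then show ?thesis using that[OF unitary_mat_of_corthogonal[OF ws(1-3)]] by blast
qed

lemma unit_eigenvector_exists:
  fixes A :: "complex mat"
  assumes A: "A \<in> carrier_mat n n" and n: "0 < n"
  obtains e v where "v \<in> carrier_vec n" "vec_norm2 v = 1" "A *\<^sub>v v = e \<cdot>\<^sub>v v"
proof -
  obtain e where "eigenvalue A e"
    using spectrum_non_empty[OF A n] unfolding spectrum_def by auto
  then obtain w where w: "w \<in> carrier_vec n" "w \<noteq> 0\<^sub>v n" "A *\<^sub>v w = e \<cdot>\<^sub>v w"
    using A unfolding eigenvalue_def eigenvector_def by auto
  define v where "v = complex_of_real (1 / vec_norm2 w) \<cdot>\<^sub>v w"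
  have "vec_norm2 v = 1" using vec_norm2_pos[OF w(1,2)] unfolding v_def vec_norm2_smult
    by (simp add: norm_divide)
  moreover have "A *\<^sub>v v = e \<cdot>\<^sub>v v"
    unfolding v_def using mult_mat_vec[OF A w(1)] w(3) by (simp add: smult_smult_assoc mult.commute)
  ultimately show ?thesis using that[of v e] w(1) unfolding v_def by simp
qed

lemma mult_four_block_diag_mat:
  assumes "A1 \<in> carrier_mat n1 n1" "A2 \<in> carrier_mat n1 n1"
    and "D1 \<in> carrier_mat n2 n2" "D2 \<in> carrier_mat n2 n2"
  shows "four_block_mat A1 (0\<^sub>m n1 n2) (0\<^sub>m n2 n1) D1 * four_block_mat A2 (0\<^sub>m n1 n2) (0\<^sub>m n2 n1) D2 =
    four_block_mat (A1 * A2) (0\<^sub>m n1 n2) (0\<^sub>m n2 n1) (D1 * D2)"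
  using assms by (subst mult_four_block_mat[of _ n1 n1 _ n2 _ n2 _ _ n1 _ n2]) auto

lemma unitary_mat_four_block_diag:
  assumes A: "unitary_mat n1 A" and D: "unitary_mat n2 D"
  shows "unitary_mat (n1 + n2) (four_block_mat A (0\<^sub>m n1 n2) (0\<^sub>m n2 n1) D)"
proof -
  note A' = unitary_matD[OF A] and D' = unitary_matD[OF D]
  have "adj (four_block_mat A (0\<^sub>m n1 n2) (0\<^sub>m n2 n1) D) =
      four_block_mat (adj A) (0\<^sub>m n1 n2) (0\<^sub>m n2 n1) (adj D)"
    using A' D' by (subst mat_adjoint_four_block_mat) auto
  then show ?thesis
    using A' D' by (simp add: unitary_mat_def mult_four_block_diag_mat[of _ n1 _ _ n2])
qed

lemma diagonal_mat_four_block_mat: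
  assumes "A \<in> carrier_mat n1 n1" "D \<in> carrier_mat n2 n2" "diagonal_mat A" "diagonal_mat D"
  shows "diagonal_mat (four_block_mat A (0\<^sub>m n1 n2) (0\<^sub>m n2 n1) D)"
  using assms unfolding diagonal_mat_def by auto

lemma hermitian_deflation:
  assumes H: "H \<in> carrier_mat (Suc m) (Suc m)" "adj H = H"
    and W: "unitary_mat (Suc m) W" and ev: "H *\<^sub>v col W 0 = e \<cdot>\<^sub>v col W 0"
  obtains H' where "H' \<in> carrier_mat m m" "adj H' = H'"
    "adj W * H * W = four_block_mat (mat 1 1 (\<lambda>_. e)) (0\<^sub>m 1 m) (0\<^sub>m m 1) H'"
proof -
  note W' = unitary_matD[OF W]
  define G where "G = adj W * H * W"
  have G: "G \<in> carrier_mat (Suc m) (Suc m)" unfolding G_def using H W' by auto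
  have G_assoc: "G = adj W * (H * W)"
    unfolding G_def using H W'
    by (auto intro: assoc_mult_mat[of _ "Suc m" "Suc m" _ "Suc m" _ "Suc m"])
  have "adj G = G" unfolding G_assoc using H W'
    by (simp add: mat_adjoint_mult[of _ "Suc m" "Suc m" _ "Suc m"]
        assoc_mult_mat[of _ "Suc m" "Suc m" _ "Suc m" _ "Suc m"])
  have "col G 0 = adj W *\<^sub>v (H *\<^sub>v col W 0)"
    unfolding G_assoc using H W'
    by (simp add: col_mult2[of _ "Suc m" "Suc m" _ "Suc m"] del: col_mult)
  also have "\<dots> = e \<cdot>\<^sub>v (adj W *\<^sub>v col W 0)"
    unfolding ev using W' col_carrier_vec[of 0 "Suc m" W "Suc m"]
    by (intro mult_mat_vec[of _ "Suc m" "Suc m"]) auto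
  also have "adj W *\<^sub>v col W 0 = col (adj W * W) 0"
    by (rule col_mult2[symmetric, of _ "Suc m" "Suc m" _ "Suc m"]) (use W'(1) in auto)
  finally have "col G 0 = e \<cdot>\<^sub>v col (1\<^sub>m (Suc m)) 0" unfolding W'(2) .
  then have col0: "G $$ (i, 0) = (if i = 0 then e else 0)" if "i < Suc m" for i
    using that G by (auto dest!: arg_cong[of _ _ "\<lambda>v. v $ i"])
  have row0: "G $$ (0, j) = 0" if "0 < j" "j < Suc m" for j
  proof -
    have "G $$ (0, j) = cnj (G $$ (j, 0))" using cnj_index_hermitian[OF \<open>adj G = G\<close> G] that by simp
    then show ?thesis using col0[OF that(2)] that(1) by simp
  qed
  define H' where "H' = mat m m (\<lambda>(i, j). G $$ (Suc i, Suc j))"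
  have "adj H' = H'"
    by (rule eq_matI) (use cnj_index_hermitian[OF \<open>adj G = G\<close> G] in \<open>auto simp: H'_def\<close>)
  moreover have "G = four_block_mat (mat 1 1 (\<lambda>_. e)) (0\<^sub>m 1 m) (0\<^sub>m m 1) H'"
    by (rule eq_matI) (use G col0 row0 in \<open>auto simp: H'_def\<close>)
  ultimately show ?thesis using that[of H'] unfolding G_def H'_def by auto
qed

theorem hermitian_unitarily_diagonalizable:
  assumes "H \<in> carrier_mat n n" "adj H = H"
  obtains U where "unitary_mat n U" "diagonal_mat (adj U * H * U)"
  using assms
proof (induction n arbitrary: H thesis)
  case 0
  have "diagonal_mat (adj (1\<^sub>m 0) * H * 1\<^sub>m 0)" by (simp add: diagonal_mat_def)
  then show ?case using 0 unitary_mat_one by blast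
next
  case (Suc m)
  obtain e v where v: "v \<in> carrier_vec (Suc m)" "vec_norm2 v = 1" "H *\<^sub>v v = e \<cdot>\<^sub>v v"
    using unit_eigenvector_exists[OF Suc.prems(2)] by blast
  obtain W where W: "unitary_mat (Suc m) W" "col W 0 = v"
    using unitary_mat_with_first_col[OF v(1,2)] by blast
  obtain H' where H': "H' \<in> carrier_mat m m" "adj H' = H'"
    and deflate: "adj W * H * W = four_block_mat (mat 1 1 (\<lambda>_. e)) (0\<^sub>m 1 m) (0\<^sub>m m 1) H'"
    using hermitian_deflation[OF Suc.prems(2,3) W(1)] v(3) W(2) by blast
  obtain U' where U': "unitary_mat m U'" "diagonal_mat (adj U' * H' * U')"
    using Suc.IH[OF _ H'] by blast
  note U'' = unitary_matD[OF U'(1)]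
  define B where "B = four_block_mat (1\<^sub>m 1) (0\<^sub>m 1 m) (0\<^sub>m m 1) U'"
  have "unitary_mat (Suc m) B"
    using unitary_mat_four_block_diag[OF unitary_mat_one[of 1] U'(1)] unfolding B_def by simp
  then have B: "B \<in> carrier_mat (Suc m) (Suc m)" and U: "unitary_mat (Suc m) (W * B)"
    using unitary_matD(1) unitary_mat_mult[OF W(1)] by auto
  have adj_B: "adj B = four_block_mat (1\<^sub>m 1) (0\<^sub>m 1 m) (0\<^sub>m m 1) (adj U')"
    unfolding B_def using U'' by (subst mat_adjoint_four_block_mat) auto
  note W' = unitary_matD[OF W(1)]
  have "adj (W * B) * H * (W * B) = adj B * (adj W * H * W) * B"
    using W'(1) B Suc.prems(2)
    by (simp add: mat_adjoint_mult[of _ "Suc m" "Suc m" _ "Suc m"]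
        assoc_mult_mat[of _ "Suc m" "Suc m" _ "Suc m" _ "Suc m"]
        mult_carrier_mat[of _ "Suc m" "Suc m" _ "Suc m"])
  also have "\<dots> = four_block_mat (mat 1 1 (\<lambda>_. e)) (0\<^sub>m 1 m) (0\<^sub>m m 1) (adj U' * H' * U')"
    unfolding deflate adj_B unfolding B_def using U'' H'
    by (simp add: mult_four_block_diag_mat[of _ "Suc 0" _ _ m] mult_carrier_mat[of _ m m _ m])
  finally have "diagonal_mat (adj (W * B) * H * (W * B))"
    using U'(2) U'' H' by (auto intro!: diagonal_mat_four_block_mat simp: diagonal_mat_def)
  then show ?case using Suc.prems(1) U by blast
qed

lemma hs_inner_sum:
  assumes "A \<in> carrier_mat n m" "B \<in> carrier_mat n m"
  shows "hs_inner A B = (\<Sum>i<m. \<Sum>k<n. cnj (A $$ (k, i)) * B $$ (k, i))"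
  unfolding hs_inner_def mat_trace_def using assms
  by (simp add: index_mult_mat_sum[of _ m n _ m] del: index_mult_mat(1))

lemma hs_inner_cols:
  assumes "A \<in> carrier_mat n m" "B \<in> carrier_mat n m"
  shows "hs_inner A B = (\<Sum>i<m. col B i \<bullet>c col A i)"
  unfolding hs_inner_def mat_trace_def using assms
  by (simp add: index_mat_adjoint_mult del: index_mult_mat(1))

lemma hs_inner_commute:
  assumes "A \<in> carrier_mat n m" "B \<in> carrier_mat n m"
  shows "hs_inner B A = cnj (hs_inner A B)"
  using assms by (simp add: hs_inner_sum mult.commute)

lemma norm_hs_inner_commute:
  assumes "A \<in> carrier_mat n m" "B \<in> carrier_mat n m"
  shows "cmod (hs_inner B A) = cmod (hs_inner A B)"
  using hs_inner_commute[OF assms] by simp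

lemma norm_hs_inner_le_sum:
  assumes "A \<in> carrier_mat n m" "B \<in> carrier_mat n m"
  shows "cmod (hs_inner A B) \<le> (\<Sum>i<m. \<Sum>k<n. cmod (A $$ (k, i)) * cmod (B $$ (k, i)))"
  unfolding hs_inner_sum[OF assms]
  by (intro order.trans[OF norm_sum] sum_mono order.trans[OF norm_sum]) (simp add: norm_mult)

lemma hs_inner_smult_left:
  assumes "A \<in> carrier_mat n m" "B \<in> carrier_mat n m"
  shows "hs_inner (c \<cdot>\<^sub>m A) B = cnj c * hs_inner A B"
  using assms by (simp add: hs_inner_sum[of _ n m] sum_distrib_left mult_ac)

lemma mat_trace_mult_commute:
  assumes X: "X \<in> carrier_mat n m" and Y: "Y \<in> carrier_mat m n"
  shows "mat_trace (X * Y) = mat_trace (Y * X)"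
  unfolding mat_trace_def using assms
  by (simp add: index_mult_mat_sum[of X n m Y n] index_mult_mat_sum[of Y m n X m] mult.commute
      sum.swap[of _ "{..<m}"] del: index_mult_mat(1))

lemma hs_inner_mult_unitary:
  assumes A: "A \<in> carrier_mat n n" and B: "B \<in> carrier_mat n n" and U: "unitary_mat n U"
  shows "hs_inner (A * U) (B * U) = hs_inner A B"
proof -
  note U' = unitary_matD[OF U]
  have "hs_inner (A * U) (B * U) = mat_trace (adj U * (adj A * B * U))"
    unfolding hs_inner_def using A B U'
    by (simp add: mat_adjoint_mult[of _ n n _ n] assoc_mult_mat[of _ n n _ n _ n]
        mult_carrier_mat[of _ n n _ n])
  also have "\<dots> = mat_trace ((adj A * B * U) * adj U)"
    using A B U' by (intro mat_trace_mult_commute[of _ n n]) auto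
  also have "(adj A * B * U) * adj U = adj A * B"
    using A B U' by (simp add: assoc_mult_mat[of _ n n _ n _ n] mult_carrier_mat[of _ n n _ n])
  finally show ?thesis unfolding hs_inner_def .
qed

definition frobenius_norm :: "complex mat \<Rightarrow> real" where
  "frobenius_norm A = L2_set (\<lambda>i. vec_norm2 (col A i)) {..<dim_col A}"

lemma frobenius_norm_nonneg [simp]: "0 \<le> frobenius_norm A"
  unfolding frobenius_norm_def by simp

lemma hs_inner_self:
  assumes "A \<in> carrier_mat n m"
  shows "hs_inner A A = complex_of_real ((frobenius_norm A)\<^sup>2)"
  using assms unfolding hs_inner_cols[OF assms assms] frobenius_norm_def L2_set_def
  by (simp add: cscalar_prod_self sum_nonneg)

lemma frobenius_norm_pos:
  assumes A: "A \<in> carrier_mat n m" and "A \<noteq> 0\<^sub>m n m"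
  shows "0 < frobenius_norm A"
proof -
  obtain k i where ki: "k < n" "i < m" "A $$ (k, i) \<noteq> 0"
    using assms by (metis eq_matI carrier_matD index_zero_mat)
  then have "col A i \<noteq> 0\<^sub>v n" using A by (metis carrier_matD index_col index_zero_vec(1))
  then have "0 < vec_norm2 (col A i)" using A ki(2) by (intro vec_norm2_pos) auto
  also have "\<dots> \<le> frobenius_norm A"
    unfolding frobenius_norm_def using A ki(2) by (intro member_le_L2_set) auto
  finally show ?thesis .
qed

lemma frobenius_norm_smult: "frobenius_norm (c \<cdot>\<^sub>m A) = cmod c * frobenius_norm A"
proof -
  have "L2_set (\<lambda>i. vec_norm2 (col (c \<cdot>\<^sub>m A) i)) {..<dim_col A} =
      L2_set (\<lambda>i. cmod c * vec_norm2 (col A i)) {..<dim_col A}"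
    by (rule L2_set_cong) (simp_all add: vec_norm2_smult)
  then show ?thesis unfolding frobenius_norm_def by (simp add: L2_set_right_distrib)
qed

lemma norm_hs_inner_le_frobenius:
  assumes A: "A \<in> carrier_mat n m" and B: "B \<in> carrier_mat n m"
  shows "cmod (hs_inner A B) \<le> frobenius_norm A * frobenius_norm B"
proof -
  have "cmod (hs_inner A B) \<le> (\<Sum>i<m. \<bar>vec_norm2 (col A i)\<bar> * \<bar>vec_norm2 (col B i)\<bar>)"
    unfolding hs_inner_cols[OF A B]
  proof (intro order.trans[OF norm_sum] sum_mono)
    fix i assume "i \<in> {..<m}"
    then show "cmod (col B i \<bullet>c col A i) \<le> \<bar>vec_norm2 (col A i)\<bar> * \<bar>vec_norm2 (col B i)\<bar>"
      using norm_cscalar_prod_le[of "col A i" "col B i"] A B by (simp add: mult.commute)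
  qed
  also have "\<dots> \<le> frobenius_norm A * frobenius_norm B"
    using A B L2_set_mult_ineq[where f = "\<lambda>i. vec_norm2 (col A i)" and g = "\<lambda>i. vec_norm2 (col B i)"
        and A = "{..<m}"]
    unfolding frobenius_norm_def by simp
  finally show ?thesis .
qed

lemma frobenius_norm_mult_unitary:
  assumes A: "A \<in> carrier_mat n n" and U: "unitary_mat n U"
  shows "frobenius_norm (A * U) = frobenius_norm A"
proof -
  have "A * U \<in> carrier_mat n n" using A unitary_matD(1)[OF U] by simp
  then have "complex_of_real ((frobenius_norm (A * U))\<^sup>2) = complex_of_real ((frobenius_norm A)\<^sup>2)"
    using hs_inner_mult_unitary[OF A A U] by (simp only: hs_inner_self[OF A] hs_inner_self)
  then have "(frobenius_norm (A * U))\<^sup>2 = (frobenius_norm A)\<^sup>2" by (simp only: of_real_eq_iff)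
  then show ?thesis by simp
qed

lemma frobenius_norm_attained:
  assumes A: "A \<in> carrier_mat n m"
  obtains B where "B \<in> carrier_mat n m" "frobenius_norm B \<le> 1"
    "frobenius_norm A \<le> cmod (hs_inner B A)"
proof -
  define f where "f = frobenius_norm A"
  define B where "B = complex_of_real (1 / f) \<cdot>\<^sub>m A"
  have B: "B \<in> carrier_mat n m" unfolding B_def using A by simp
  have "frobenius_norm B \<le> 1" unfolding B_def frobenius_norm_smult f_def by (simp add: norm_divide)
  moreover have "hs_inner B A = complex_of_real (f\<^sup>2 / f)"
    unfolding B_def hs_inner_smult_left[OF A A] hs_inner_self[OF A] f_def by simp
  then have "frobenius_norm A \<le> cmod (hs_inner B A)" unfolding f_def by (simp add: power2_eq_square)
  ultimately show ?thesis using that B by blast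
qed

text \<open>Zero columns stay zero, since \<open>x / 0 = 0\<close>.\<close>
definition normalize_cols :: "complex mat \<Rightarrow> complex mat" where
  "normalize_cols W =
    mat (dim_row W) (dim_col W) (\<lambda>(k, i). W $$ (k, i) / complex_of_real (vec_norm2 (col W i)))"

lemma normalize_cols_carrier [simp]: "W \<in> carrier_mat n m \<Longrightarrow> normalize_cols W \<in> carrier_mat n m"
  unfolding normalize_cols_def by auto

lemma col_normalize_cols:
  assumes "i < dim_col W"
  shows "col (normalize_cols W) i = complex_of_real (1 / vec_norm2 (col W i)) \<cdot>\<^sub>v col W i"
  using assms unfolding normalize_cols_def by (rule_tac eq_vecI) auto

lemma vec_norm2_col_normalize_cols_le: "i < dim_col W \<Longrightarrow> vec_norm2 (col (normalize_cols W) i) \<le> 1"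
  by (simp add: col_normalize_cols vec_norm2_smult norm_divide)

lemma cscalar_prod_col_normalize_cols:
  assumes "i < dim_col W"
  shows "col W i \<bullet>c col (normalize_cols W) i = complex_of_real (vec_norm2 (col W i))"
  using assms
  by (simp add: col_normalize_cols conjugate_smult_vec cscalar_prod_self power2_eq_square)

lemma diagonal_mat_normalize_cols:
  assumes W: "W \<in> carrier_mat n m" and D: "diagonal_mat (adj W * W)"
  shows "diagonal_mat (adj (normalize_cols W) * normalize_cols W)"
  unfolding diagonal_mat_def
proof (intro allI impI)
  have V: "normalize_cols W \<in> carrier_mat n m" using W by simp
  fix i j assume "i < dim_row (adj (normalize_cols W) * normalize_cols W)"
    "j < dim_col (adj (normalize_cols W) * normalize_cols W)" "i \<noteq> j"
  then show "(adj (normalize_cols W) * normalize_cols W) $$ (i, j) = 0"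
    using V W by (simp add: index_mat_adjoint_mult[OF V V] col_normalize_cols conjugate_smult_vec
        cscalar_prod_orthogonal_cols[OF W D] del: index_mult_mat(1))
qed

lemma hs_inner_normalize_cols:
  assumes W: "W \<in> carrier_mat n m"
  shows "hs_inner (normalize_cols W) W = complex_of_real (\<Sum>i<m. vec_norm2 (col W i))"
  unfolding hs_inner_cols[OF normalize_cols_carrier[OF W] W] of_real_sum
  using W by (intro sum.cong refl) (simp add: cscalar_prod_col_normalize_cols)

definition mat_unit :: "nat \<Rightarrow> nat \<Rightarrow> nat \<Rightarrow> complex mat" where
  "mat_unit n k i = mat n n (\<lambda>(a, b). if a = k \<and> b = i then 1 else 0)"

lemma mat_unit_carrier [simp]: "mat_unit n k i \<in> carrier_mat n n"
  unfolding mat_unit_def by simp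

lemma hs_inner_mat_unit:
  assumes Y: "Y \<in> carrier_mat n n" and "k < n" "i < n"
  shows "hs_inner (mat_unit n k i) Y = Y $$ (k, i)"
proof -
  have "hs_inner (mat_unit n k i) Y = (\<Sum>b<n. \<Sum>a<n. if a = k \<and> b = i then Y $$ (k, i) else 0)"
    unfolding hs_inner_sum[OF mat_unit_carrier Y] by (intro sum.cong refl) (auto simp: mat_unit_def)
  also have "\<dots> = (\<Sum>b<n. if b = i then Y $$ (k, i) else 0)"
    using assms by (intro sum.cong refl) auto
  finally show ?thesis using assms by simp
qed

definition outer_prod_mat :: "complex vec \<Rightarrow> complex vec \<Rightarrow> complex mat" where
  "outer_prod_mat v u = mat (dim_vec v) (dim_vec u) (\<lambda>(a, b). v $ a * cnj (u $ b))"

lemma hs_inner_outer_prod_mat: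
  assumes Z: "Z \<in> carrier_mat n m" and u: "u \<in> carrier_vec m" and v: "v \<in> carrier_vec n"
  shows "hs_inner (outer_prod_mat v u) Z = (Z *\<^sub>v u) \<bullet>c v"
proof -
  have "hs_inner (outer_prod_mat v u) Z = (\<Sum>b<m. \<Sum>a<n. cnj (v $ a) * (Z $$ (a, b) * u $ b))"
    using u v Z
    by (subst hs_inner_sum[of _ n m]) (auto simp: outer_prod_mat_def mult_ac intro!: sum.cong)
  also have "\<dots> = (\<Sum>a<n. cnj (v $ a) * (\<Sum>b<m. Z $$ (a, b) * u $ b))"
    by (simp add: sum.swap[of _ "{..<m}"] sum_distrib_left)
  also have "\<dots> = (Z *\<^sub>v u) \<bullet>c v"
    using Z u v by (simp add: scalar_prod_def lessThan_atLeast0 index_mult_mat_vec_sum mult.commute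
        del: index_mult_mat_vec)
  finally show ?thesis .
qed

section \<open>Singular values and Schatten norms\<close>

lemma proots_prod_list_linear: "proots (\<Prod>a\<leftarrow>as. [:- a, 1:]) = mset (as :: complex list)"
proof (induction as)
  case (Cons a as)
  have "(\<Prod>b\<leftarrow>as. [:- b, 1:]) \<noteq> (0 :: complex poly)" by auto
  then have "proots ([:- a, 1:] * (\<Prod>b\<leftarrow>as. [:- b, 1:])) =
      proots [:- a, 1:] + proots (\<Prod>b\<leftarrow>as. [:- b, 1:])"
    by (intro proots_mult) auto
  then show ?case unfolding list.map prod_list.Cons Cons.IH by simp
qed simp

lemma proots_char_poly_unitary_diagonal:
  assumes H: "H \<in> carrier_mat n n" and U: "unitary_mat n U" and D: "diagonal_mat (adj U * H * U)"
  shows "proots (char_poly H) = mset (diag_mat (adj U * H * U))"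
proof -
  note U' = unitary_matD[OF U]
  define G where "G = adj U * H * U"
  have G: "G \<in> carrier_mat n n" unfolding G_def using H U' by auto
  have "U * G * adj U = (U * adj U) * H * (U * adj U)"
    unfolding G_def using H U'(1)
    by (simp add: assoc_mult_mat[of _ n n _ n _ n] mult_carrier_mat[of _ n n _ n])
  then have "H = U * G * adj U" using H U'(3) by simp
  then have "similar_mat H G" using H G U' by (intro similar_matI[of H G U "adj U" n]) auto
  moreover have "upper_triangular G"
    using D G unfolding G_def[symmetric] diagonal_mat_def upper_triangular_def by auto
  ultimately show ?thesis
    unfolding G_def[symmetric]
    using char_poly_similar char_poly_upper_triangular[OF G] proots_prod_list_linear
    by metis
qed

text \<open>The decomposition \<open>A U = V \<Sigma>\<close>, stated without \<open>V\<close>: the columns of \<open>A U\<close> are orthogonal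
  and their norms are the singular values.\<close>
theorem singular_value_decomposition:
  assumes A: "A \<in> carrier_mat n n"
  obtains U where "unitary_mat n U" "diagonal_mat (adj (A * U) * (A * U))"
    "singular_values A = mset (map (\<lambda>i. vec_norm2 (col (A * U) i)) [0..<n])"
proof -
  define H where "H = adj A * A"
  have H: "H \<in> carrier_mat n n" unfolding H_def using A by auto
  have "adj H = H" unfolding H_def using A by (simp add: mat_adjoint_mult[of _ n n _ n])
  then obtain U where U: "unitary_mat n U" "diagonal_mat (adj U * H * U)"
    using hermitian_unitarily_diagonalizable[OF H] by blast
  note U' = unitary_matD[OF U(1)]
  define G where "G = adj (A * U) * (A * U)"
  have G: "G \<in> carrier_mat n n" unfolding G_def using A U' by auto
  have G_conj: "G = adj U * H * U"
    unfolding G_def H_def using A U'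
    by (simp add: mat_adjoint_mult[of _ n n _ n] assoc_mult_mat[of _ n n _ n _ n]
        mult_carrier_mat[of _ n n _ n])
  have "singular_values A = mset (map (\<lambda>i. sqrt (Re (G $$ (i, i)))) [0..<n])"
    using proots_char_poly_unitary_diagonal[OF H U] G
    unfolding singular_values_def H_def[symmetric] G_conj[symmetric] diag_mat_def
    by (simp add: multiset.map_comp o_def)
  also have "map (\<lambda>i. sqrt (Re (G $$ (i, i)))) [0..<n] =
      map (\<lambda>i. vec_norm2 (col (A * U) i)) [0..<n]"
  proof (rule map_cong)
    fix i assume "i \<in> set [0..<n]"
    then show "sqrt (Re (G $$ (i, i))) = vec_norm2 (col (A * U) i)"
      using index_mat_adjoint_mult[of "A * U" n n "A * U" n i i] A U'(1) unfolding G_def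
      by (simp add: cscalar_prod_self del: index_mult_mat(1) of_real_power)
  qed simp
  finally show ?thesis using that U unfolding G_conj[symmetric] G_def by blast
qed

lemma sum_mset_mset_map_upt: "(\<Sum>s\<in>#mset (map f [0..<n]). g s) = (\<Sum>i<n. g (f i))"
  by (induction n) (auto simp: add.commute)

lemma schatten_norm_singular_values:
  assumes "singular_values A = mset (map \<sigma> [0..<n])"
  shows "schatten_norm p A = (\<Sum>i<n. \<sigma> i powr p) powr (1 / p)"
  unfolding schatten_norm_def assms sum_mset_mset_map_upt ..

lemma schatten_norm_nonneg: "0 \<le> schatten_norm p A"
  unfolding schatten_norm_def by simp

lemma schatten_norm_1_singular_values:
  assumes "singular_values A = mset (map \<sigma> [0..<n])" "\<And>i. 0 \<le> \<sigma> i"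
  shows "schatten_norm 1 A = (\<Sum>i<n. \<sigma> i)"
  unfolding schatten_norm_singular_values[OF assms(1)] using assms(2) by (simp add: sum_nonneg)

lemma schatten_norm_2_singular_values:
  assumes "singular_values A = mset (map \<sigma> [0..<n])" "\<And>i. 0 \<le> \<sigma> i"
  shows "schatten_norm 2 A = L2_set \<sigma> {..<n}"
  unfolding schatten_norm_singular_values[OF assms(1)] L2_set_def using assms(2)
  by (simp add: powr_half_sqrt sum_nonneg)

lemma schatten_norm_2_eq_frobenius_norm:
  assumes A: "A \<in> carrier_mat n n"
  shows "schatten_norm 2 A = frobenius_norm A"
proof -
  obtain U where U: "unitary_mat n U"
    and sv: "singular_values A = mset (map (\<lambda>i. vec_norm2 (col (A * U) i)) [0..<n])"
    using singular_value_decomposition[OF A] by blast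
  have "schatten_norm 2 A = frobenius_norm (A * U)"
    unfolding schatten_norm_2_singular_values[OF sv vec_norm2_nonneg] frobenius_norm_def
    using A unitary_matD(1)[OF U] by simp
  then show ?thesis using frobenius_norm_mult_unitary[OF A U] by simp
qed

lemma vec_norm2_mult_mat_vec_le:
  assumes A: "A \<in> carrier_mat n m" and x: "x \<in> carrier_vec m"
  shows "vec_norm2 (A *\<^sub>v x) \<le> (\<Sum>k<n. \<Sum>l<m. cmod (A $$ (k, l))) * vec_norm2 x"
proof -
  have entry: "cmod ((A *\<^sub>v x) $ k) \<le> (\<Sum>l<m. cmod (A $$ (k, l))) * vec_norm2 x" if k: "k < n" for k
  proof -
    have "cmod ((A *\<^sub>v x) $ k) \<le> (\<Sum>l<m. cmod (A $$ (k, l)) * cmod (x $ l))"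
      unfolding index_mult_mat_vec_sum[OF A x k]
      by (rule order.trans[OF norm_sum]) (simp add: norm_mult)
    also have "\<dots> \<le> (\<Sum>l<m. cmod (A $$ (k, l)) * vec_norm2 x)"
      using x by (intro sum_mono mult_left_mono)
        (auto simp: vec_norm2_L2_set intro: member_le_L2_set)
    finally show ?thesis by (simp add: sum_distrib_right)
  qed
  have "vec_norm2 (A *\<^sub>v x) \<le> (\<Sum>k<n. cmod ((A *\<^sub>v x) $ k))"
    unfolding vec_norm2_L2_set using A L2_set_le_sum_abs[of "\<lambda>k. cmod ((A *\<^sub>v x) $ k)" "{..<n}"]
    by (simp del: index_mult_mat_vec)
  also have "\<dots> \<le> (\<Sum>k<n. (\<Sum>l<m. cmod (A $$ (k, l))) * vec_norm2 x)"
    by (intro sum_mono entry) simp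
  also have "\<dots> = (\<Sum>k<n. \<Sum>l<m. cmod (A $$ (k, l))) * vec_norm2 x"
    by (simp add: sum_distrib_right)
  finally show ?thesis .
qed

abbreviation op_norm_ratios :: "complex mat \<Rightarrow> real set" where
  "op_norm_ratios A \<equiv>
    {vec_norm2 (A *\<^sub>v x) / vec_norm2 x | x. x \<in> carrier_vec (dim_col A) \<and> x \<noteq> 0\<^sub>v (dim_col A)}"

lemma bdd_above_op_norm_ratios:
  assumes A: "A \<in> carrier_mat n m"
  shows "bdd_above (op_norm_ratios A)"
proof (rule bdd_aboveI, clarify)
  fix x :: "complex vec" assume "x \<in> carrier_vec (dim_col A)" "x \<noteq> 0\<^sub>v (dim_col A)"
  then have x: "x \<in> carrier_vec m" "0 < vec_norm2 x" using A vec_norm2_pos by auto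
  then show "vec_norm2 (A *\<^sub>v x) / vec_norm2 x \<le> (\<Sum>k<n. \<Sum>l<m. cmod (A $$ (k, l)))"
    using vec_norm2_mult_mat_vec_le[OF A x(1)] by (simp add: divide_le_eq)
qed

lemma norm_mult_vec_le_op_norm:
  assumes A: "A \<in> carrier_mat n m" and x: "x \<in> carrier_vec m"
  shows "vec_norm2 (A *\<^sub>v x) \<le> op_norm A * vec_norm2 x"
proof (cases "x = 0\<^sub>v m")
  case True
  moreover have "A *\<^sub>v x = 0\<^sub>v n" using A True by auto
  ultimately show ?thesis by simp
next
  case False
  have "vec_norm2 (A *\<^sub>v x) / vec_norm2 x \<le> op_norm A"
    unfolding op_norm_def
    by (rule cSup_upper[OF _ bdd_above_op_norm_ratios[OF A]]) (use A x False in auto)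
  then show ?thesis using vec_norm2_pos[OF x False] by (simp add: divide_le_eq)
qed

lemma op_norm_ratios_nonempty:
  assumes "A \<in> carrier_mat n m" "0 < m"
  shows "op_norm_ratios A \<noteq> {}"
proof -
  have "unit_vec m 0 \<noteq> (0\<^sub>v m :: complex vec)"
    using assms(2) by (metis index_unit_vec(1) index_zero_vec(1) one_neq_zero)
  then show ?thesis using assms(1) by (auto intro!: exI[of _ "unit_vec m 0"])
qed

lemma op_norm_nonneg:
  assumes "A \<in> carrier_mat n m" "0 < m"
  shows "0 \<le> op_norm A"
proof -
  obtain r where r: "r \<in> op_norm_ratios A"
    using op_norm_ratios_nonempty[OF assms] by blast
  then have "0 \<le> r" by auto
  also have "r \<le> op_norm A" unfolding op_norm_def
    by (rule cSup_upper[OF r bdd_above_op_norm_ratios[OF assms(1)]])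
  finally show ?thesis .
qed

lemma op_norm_le:
  assumes A: "A \<in> carrier_mat n m" and m: "0 < m"
    and c: "\<And>x. x \<in> carrier_vec m \<Longrightarrow> vec_norm2 (A *\<^sub>v x) \<le> c * vec_norm2 x"
  shows "op_norm A \<le> c"
  unfolding op_norm_def
proof (rule cSup_least[OF op_norm_ratios_nonempty[OF A m]], clarify)
  fix x :: "complex vec" assume "x \<in> carrier_vec (dim_col A)" "x \<noteq> 0\<^sub>v (dim_col A)"
  then have x: "x \<in> carrier_vec m" "0 < vec_norm2 x" using A vec_norm2_pos by auto
  then show "vec_norm2 (A *\<^sub>v x) / vec_norm2 x \<le> c" using c[OF x(1)] by (simp add: divide_le_eq)
qed

lemma op_norm_orthogonal_cols_mult_adjoint_le:
  assumes M: "M \<in> carrier_mat n n" "diagonal_mat (adj M * M)"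
    and U: "unitary_mat n U" and n: "0 < n"
    and c: "0 \<le> c" "\<And>i. i < n \<Longrightarrow> vec_norm2 (col M i) \<le> c"
  shows "op_norm (M * adj U) \<le> c"
proof (rule op_norm_le[of _ n n])
  note U' = unitary_matD[OF unitary_mat_adjoint[OF U]]
  show "M * adj U \<in> carrier_mat n n" using M U' by simp
  fix x :: "complex vec" assume x: "x \<in> carrier_vec n"
  have "vec_norm2 ((M * adj U) *\<^sub>v x) = vec_norm2 (M *\<^sub>v (adj U *\<^sub>v x))"
    using M U' x by (simp add: assoc_mult_mat_vec[of _ n n _ n])
  also have "\<dots> \<le> c * vec_norm2 (adj U *\<^sub>v x)"
    using U' x by (intro vec_norm2_mult_orthogonal_cols_le[OF M _ c]) auto
  also have "vec_norm2 (adj U *\<^sub>v x) = vec_norm2 x"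
    by (rule vec_norm2_mult_unitary[OF unitary_mat_adjoint[OF U] x])
  finally show "vec_norm2 ((M * adj U) *\<^sub>v x) \<le> c * vec_norm2 x" .
qed (use n in simp)

section \<open>Duality between the trace norm and the operator norm\<close>

theorem norm_hs_inner_le_op_norm_schatten_1:
  assumes A: "A \<in> carrier_mat n n" and B: "B \<in> carrier_mat n n"
  shows "cmod (hs_inner B A) \<le> op_norm B * schatten_norm 1 A"
proof -
  obtain U where U: "unitary_mat n U"
    and sv: "singular_values A = mset (map (\<lambda>i. vec_norm2 (col (A * U) i)) [0..<n])"
    using singular_value_decomposition[OF A] by blast
  note U' = unitary_matD[OF U]
  have "cmod (hs_inner B A) = cmod (\<Sum>i<n. col (A * U) i \<bullet>c col (B * U) i)"
    using hs_inner_mult_unitary[OF B A U] hs_inner_cols[of "B * U" n n "A * U"] A B U' by simp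
  also have "\<dots> \<le> (\<Sum>i<n. op_norm B * vec_norm2 (col (A * U) i))"
  proof (rule order.trans[OF norm_sum sum_mono])
    fix i assume "i \<in> {..<n}"
    then have i: "i < n" by simp
    have "vec_norm2 (col (B * U) i) \<le> op_norm B"
      using norm_mult_vec_le_op_norm[OF B, of "col U i"] vec_norm2_col_unitary[OF U i] B U' i
      by (simp del: col_mult)
    then have "vec_norm2 (col (A * U) i) * vec_norm2 (col (B * U) i) \<le>
        vec_norm2 (col (A * U) i) * op_norm B"
      by (rule mult_left_mono) simp
    moreover have "cmod (col (A * U) i \<bullet>c col (B * U) i) \<le>
        vec_norm2 (col (A * U) i) * vec_norm2 (col (B * U) i)"
      by (rule norm_cscalar_prod_le) (use A B U' in simp)
    ultimately have "cmod (col (A * U) i \<bullet>c col (B * U) i) \<le> vec_norm2 (col (A * U) i) * op_norm B"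
      by (rule order.trans[rotated])
    then show "cmod (col (A * U) i \<bullet>c col (B * U) i) \<le> op_norm B * vec_norm2 (col (A * U) i)"
      by (simp add: mult.commute)
  qed
  also have "\<dots> = op_norm B * schatten_norm 1 A"
    by (simp add: schatten_norm_1_singular_values[OF sv] sum_distrib_left)
  finally show ?thesis .
qed

theorem schatten_norm_1_attained:
  assumes n: "0 < n" and A: "A \<in> carrier_mat n n"
  obtains B where "B \<in> carrier_mat n n" "op_norm B \<le> 1" "schatten_norm 1 A \<le> cmod (hs_inner B A)"
proof -
  obtain U where U: "unitary_mat n U" and D: "diagonal_mat (adj (A * U) * (A * U))"
    and sv: "singular_values A = mset (map (\<lambda>i. vec_norm2 (col (A * U) i)) [0..<n])"
    using singular_value_decomposition[OF A] by blast
  note U' = unitary_matD[OF U]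
  define W where "W = A * U"
  have W: "W \<in> carrier_mat n n" unfolding W_def using A U' by simp
  define V where "V = normalize_cols W"
  have V: "V \<in> carrier_mat n n" unfolding V_def using W by simp
  have "op_norm (V * adj U) \<le> 1"
    unfolding V_def using W diagonal_mat_normalize_cols[OF W D[folded W_def]]
    by (intro op_norm_orthogonal_cols_mult_adjoint_le[OF _ _ U n])
      (auto intro: vec_norm2_col_normalize_cols_le)
  moreover have "hs_inner (V * adj U) A = hs_inner V W"
  proof -
    have "V * adj U * U = V" using V U' by (simp add: assoc_mult_mat[of _ n n _ n _ n])
    then show ?thesis
      using hs_inner_mult_unitary[of "V * adj U" n A U] V A U U' unfolding W_def by simp
  qed
  moreover have "hs_inner V W = complex_of_real (schatten_norm 1 A)"
    using hs_inner_normalize_cols[OF W] schatten_norm_1_singular_values[OF sv vec_norm2_nonneg]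
    unfolding V_def W_def by simp
  ultimately show ?thesis using that[of "V * adj U"] V U' by (simp add: schatten_norm_nonneg)
qed

lemma schatten_norm_1_outer_prod_mat_le:
  assumes n: "0 < n" and u: "u \<in> carrier_vec n" and v: "v \<in> carrier_vec n"
  shows "schatten_norm 1 (outer_prod_mat v u) \<le> vec_norm2 v * vec_norm2 u"
proof -
  define R where "R = outer_prod_mat v u"
  have R: "R \<in> carrier_mat n n" unfolding R_def outer_prod_mat_def using u v by auto
  obtain B where B: "B \<in> carrier_mat n n" "op_norm B \<le> 1" "schatten_norm 1 R \<le> cmod (hs_inner B R)"
    using schatten_norm_1_attained[OF n R] by blast
  have "cmod (hs_inner B R) = cmod ((B *\<^sub>v u) \<bullet>c v)"
    using hs_inner_commute[OF R B(1)] hs_inner_outer_prod_mat[OF B(1) u v] unfolding R_def by simp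
  also have "\<dots> \<le> vec_norm2 (B *\<^sub>v u) * vec_norm2 v"
    using B(1) u v by (intro norm_cscalar_prod_le) auto
  also have "\<dots> \<le> vec_norm2 u * vec_norm2 v"
  proof (rule mult_right_mono)
    have "vec_norm2 (B *\<^sub>v u) \<le> op_norm B * vec_norm2 u"
      by (rule norm_mult_vec_le_op_norm[OF B(1) u])
    also have "\<dots> \<le> vec_norm2 u"
      using B(2) op_norm_nonneg[OF B(1) n] by (simp add: mult_left_le_one_le)
    finally show "vec_norm2 (B *\<^sub>v u) \<le> vec_norm2 u" .
  qed simp
  finally show ?thesis using B(3) unfolding R_def by (simp add: mult.commute)
qed

theorem op_norm_attained:
  assumes n: "0 < n" and Y: "Y \<in> carrier_mat n n"
  obtains A where "A \<in> carrier_mat n n" "schatten_norm 1 A \<le> 1" "op_norm Y \<le> cmod (hs_inner A Y)"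
proof -
  obtain U where U: "unitary_mat n U" and D: "diagonal_mat (adj (Y * U) * (Y * U))"
    using singular_value_decomposition[OF Y] by blast
  note U' = unitary_matD[OF U]
  define W where "W = Y * U"
  define \<sigma> where "\<sigma> i = vec_norm2 (col W i)" for i
  have W: "W \<in> carrier_mat n n" unfolding W_def using Y U' by simp
  have "Max (\<sigma> ` {..<n}) \<in> \<sigma> ` {..<n}" using n by (intro Max_in) auto
  then obtain k where k: "k < n" "\<sigma> k = Max (\<sigma> ` {..<n})" by auto
  have "op_norm Y \<le> \<sigma> k"
  proof -
    have "W * adj U = Y" unfolding W_def using Y U' by (simp add: assoc_mult_mat[of _ n n _ n _ n])
    moreover have "\<sigma> i \<le> \<sigma> k" if "i < n" for i unfolding k(2) using that by (intro Max_ge) auto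
    ultimately show ?thesis
      using op_norm_orthogonal_cols_mult_adjoint_le[OF W D[folded W_def] U n, of "\<sigma> k"]
      unfolding \<sigma>_def by simp
  qed
  \<comment> \<open>A singular pair \<open>(u, v)\<close> for the largest singular value gives the witness \<open>v u\<^sup>*\<close>.\<close>
  define u where "u = col U k"
  define v where "v = col (normalize_cols W) k"
  have u: "u \<in> carrier_vec n" "vec_norm2 u = 1"
    unfolding u_def using U' k(1) vec_norm2_col_unitary[OF U k(1)] by auto
  have v: "v \<in> carrier_vec n" "vec_norm2 v \<le> 1"
    unfolding v_def using W k(1) vec_norm2_col_normalize_cols_le[of k W] by auto
  have "hs_inner (outer_prod_mat v u) Y = (Y *\<^sub>v u) \<bullet>c v"
    by (rule hs_inner_outer_prod_mat[OF Y u(1) v(1)])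
  also have "Y *\<^sub>v u = col W k" unfolding u_def W_def using Y U' k(1) by (simp del: col_mult)
  also have "col W k \<bullet>c v = complex_of_real (\<sigma> k)"
    unfolding v_def \<sigma>_def using W k(1) by (simp add: cscalar_prod_col_normalize_cols)
  finally have "op_norm Y \<le> cmod (hs_inner (outer_prod_mat v u) Y)"
    using \<open>op_norm Y \<le> \<sigma> k\<close> by (simp add: \<sigma>_def)
  moreover have "schatten_norm 1 (outer_prod_mat v u) \<le> 1"
    using schatten_norm_1_outer_prod_mat_le[OF n u(1) v(1)] u(2) v(2) by simp
  moreover have "outer_prod_mat v u \<in> carrier_mat n n"
    unfolding outer_prod_mat_def using u v by auto
  ultimately show ?thesis using that by blast
qed

section \<open>Induced norms of Hilbert--Schmidt adjoints\<close>

definition hs_dual_norms :: "nat \<Rightarrow> (complex mat \<Rightarrow> real) \<Rightarrow> (complex mat \<Rightarrow> real) \<Rightarrow> bool" where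
  "hs_dual_norms n n1 n2 \<longleftrightarrow>
     (\<forall>X\<in>carrier_mat n n. 0 \<le> n1 X \<and> 0 \<le> n2 X) \<and>
     (\<forall>A\<in>carrier_mat n n. \<forall>B\<in>carrier_mat n n. cmod (hs_inner A B) \<le> n1 A * n2 B) \<and>
     (\<forall>X\<in>carrier_mat n n. \<exists>B\<in>carrier_mat n n. n2 B \<le> 1 \<and> n1 X \<le> cmod (hs_inner B X)) \<and>
     (\<forall>X\<in>carrier_mat n n. \<exists>A\<in>carrier_mat n n. n1 A \<le> 1 \<and> n2 X \<le> cmod (hs_inner A X))"

lemma hs_dual_normsD:
  assumes "hs_dual_norms n n1 n2"
  shows "\<And>X. X \<in> carrier_mat n n \<Longrightarrow> 0 \<le> n1 X"
    and "\<And>A B. A \<in> carrier_mat n n \<Longrightarrow> B \<in> carrier_mat n n \<Longrightarrow> cmod (hs_inner A B) \<le> n1 A * n2 B"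
    and "\<And>X. X \<in> carrier_mat n n \<Longrightarrow> \<exists>B\<in>carrier_mat n n. n2 B \<le> 1 \<and> n1 X \<le> cmod (hs_inner B X)"
  using assms unfolding hs_dual_norms_def by auto

lemma hs_dual_norms_commute:
  assumes "hs_dual_norms n n1 n2"
  shows "hs_dual_norms n n2 n1"
proof -
  have "cmod (hs_inner A B) \<le> n2 A * n1 B" if "A \<in> carrier_mat n n" "B \<in> carrier_mat n n" for A B
  proof -
    have "cmod (hs_inner B A) \<le> n1 B * n2 A" using assms that unfolding hs_dual_norms_def by blast
    then show ?thesis using norm_hs_inner_commute[OF that] by (simp add: mult.commute)
  qed
  with assms show ?thesis unfolding hs_dual_norms_def by blast
qed

lemma hs_dual_norms_pos:
  assumes dual: "hs_dual_norms n n1 n2" and X: "X \<in> carrier_mat n n" "X \<noteq> 0\<^sub>m n n"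
  shows "0 < n1 X"
proof -
  have "0 < (frobenius_norm X)\<^sup>2" using frobenius_norm_pos[OF X] by simp
  also have "\<dots> = cmod (hs_inner X X)" using hs_inner_self[OF X(1)] by (simp del: of_real_power)
  also have "\<dots> \<le> n1 X * n2 X" by (rule hs_dual_normsD(2)[OF dual X(1) X(1)])
  finally show ?thesis
    using hs_dual_normsD(1)[OF dual X(1)] hs_dual_normsD(1)[OF hs_dual_norms_commute[OF dual] X(1)]
    by (simp add: zero_less_mult_iff)
qed

lemma hs_dual_norm_le_sum_entries:
  assumes dual: "hs_dual_norms n n1 n2" and Y: "Y \<in> carrier_mat n n"
  shows "n1 Y \<le> (\<Sum>i<n. \<Sum>k<n. n1 (mat_unit n k i) * cmod (Y $$ (k, i)))"
proof -
  obtain B where B: "B \<in> carrier_mat n n" "n2 B \<le> 1" "n1 Y \<le> cmod (hs_inner B Y)"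
    using hs_dual_normsD(3)[OF dual Y] by blast
  have "cmod (B $$ (k, i)) \<le> n1 (mat_unit n k i)" if "k < n" "i < n" for k i
  proof -
    have "cmod (B $$ (k, i)) \<le> n1 (mat_unit n k i) * n2 B"
      using hs_dual_normsD(2)[OF dual mat_unit_carrier[of n k i] B(1)]
        hs_inner_mat_unit[OF B(1) that] by simp
    also have "\<dots> \<le> n1 (mat_unit n k i)"
      using B(2) hs_dual_normsD(1)[OF dual mat_unit_carrier] by (simp add: mult_left_le)
    finally show ?thesis .
  qed
  then have "(\<Sum>i<n. \<Sum>k<n. cmod (B $$ (k, i)) * cmod (Y $$ (k, i))) \<le>
      (\<Sum>i<n. \<Sum>k<n. n1 (mat_unit n k i) * cmod (Y $$ (k, i)))"
    by (intro sum_mono mult_right_mono) auto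
  then show ?thesis using B(3) norm_hs_inner_le_sum[OF B(1) Y] by linarith
qed

lemma is_hs_adjoint_commute:
  assumes T: "\<And>X. X \<in> carrier_mat n n \<Longrightarrow> T X \<in> carrier_mat n n" and adj: "is_hs_adjoint n T S"
  shows "is_hs_adjoint n S T"
proof -
  have S: "S X \<in> carrier_mat n n" and eq: "hs_inner X (T Y) = hs_inner (S X) Y"
    if "X \<in> carrier_mat n n" "Y \<in> carrier_mat n n" for X Y
    using adj that unfolding is_hs_adjoint_def by auto
  have "hs_inner A (S B) = hs_inner (T A) B" if "A \<in> carrier_mat n n" "B \<in> carrier_mat n n" for A B
    using hs_inner_commute[OF S[OF that(2,1)] that(1)] hs_inner_commute[OF that(2) T[OF that(1)]]
      eq[OF that(2,1)] by simp
  then show ?thesis using T unfolding is_hs_adjoint_def by blast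
qed

lemma bounded_of_is_hs_adjoint:
  assumes dual: "hs_dual_norms n n1 n2"
    and T: "\<And>X. X \<in> carrier_mat n n \<Longrightarrow> T X \<in> carrier_mat n n" and adj: "is_hs_adjoint n T S"
  obtains K where "\<And>X. X \<in> carrier_mat n n \<Longrightarrow> n1 (T X) \<le> K * n1 X"
proof -
  note dual' = hs_dual_normsD[OF hs_dual_norms_commute[OF dual]]
  have S: "S X \<in> carrier_mat n n" if "X \<in> carrier_mat n n" for X
    using adj that unfolding is_hs_adjoint_def by auto
  have "n1 (T X) \<le> (\<Sum>i<n. \<Sum>k<n. n1 (mat_unit n k i) * n2 (S (mat_unit n k i))) * n1 X"
    if X: "X \<in> carrier_mat n n" for X
  proof -
    have "cmod (T X $$ (k, i)) \<le> n2 (S (mat_unit n k i)) * n1 X" if "k < n" "i < n" for k i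
      using hs_inner_mat_unit[OF T[OF X] that] adj dual'(2)[OF S[OF mat_unit_carrier] X]
      unfolding is_hs_adjoint_def by (metis X mat_unit_carrier)
    then have "(\<Sum>i<n. \<Sum>k<n. n1 (mat_unit n k i) * cmod (T X $$ (k, i))) \<le>
        (\<Sum>i<n. \<Sum>k<n. n1 (mat_unit n k i) * (n2 (S (mat_unit n k i)) * n1 X))"
      using hs_dual_normsD(1)[OF dual mat_unit_carrier] by (intro sum_mono mult_left_mono) auto
    then show ?thesis
      using hs_dual_norm_le_sum_entries[OF dual T[OF X]] by (simp add: sum_distrib_right mult.assoc)
  qed
  then show ?thesis using that by blast
qed

lemma bdd_above_induced_ratios:
  fixes nrm :: "complex mat \<Rightarrow> real" and T :: "complex mat \<Rightarrow> complex mat"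
  assumes nonneg: "\<And>X. X \<in> carrier_mat n n \<Longrightarrow> 0 \<le> nrm X"
    and K: "\<And>X. X \<in> carrier_mat n n \<Longrightarrow> nrm (T X) \<le> K * nrm X"
  shows "bdd_above {nrm (T X) / nrm X | X. X \<in> carrier_mat n n \<and> X \<noteq> 0\<^sub>m n n}"
proof (rule bdd_aboveI[of _ "max K 0"], clarify)
  fix X :: "complex mat" assume X: "X \<in> carrier_mat n n"
  show "nrm (T X) / nrm X \<le> max K 0"
  proof (cases "nrm X = 0")
    case False
    then have "0 < nrm X" using nonneg[OF X] by simp
    then show ?thesis using K[OF X] by (simp add: divide_le_eq max_mult_distrib_right)
  qed simp
qed

lemma bdd_above_induced_ratios_of_adjoint:
  assumes dual: "hs_dual_norms n n1 n2"
    and T: "\<And>X. X \<in> carrier_mat n n \<Longrightarrow> T X \<in> carrier_mat n n" and adj: "is_hs_adjoint n T S"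
  shows "bdd_above {n1 (T X) / n1 X | X. X \<in> carrier_mat n n \<and> X \<noteq> 0\<^sub>m n n}"
proof -
  obtain K where K: "\<And>X. X \<in> carrier_mat n n \<Longrightarrow> n1 (T X) \<le> K * n1 X"
    using bounded_of_is_hs_adjoint[OF dual T adj] by blast
  show ?thesis
    using bdd_above_induced_ratios[where nrm = n1 and T = T, OF hs_dual_normsD(1)[OF dual] K] .
qed

lemma one_mat_neq_zero_mat:
  assumes "0 < n"
  shows "1\<^sub>m n \<noteq> (0\<^sub>m n n :: complex mat)"
proof
  assume "1\<^sub>m n = (0\<^sub>m n n :: complex mat)"
  then have "(1\<^sub>m n :: complex mat) $$ (0, 0) = (0\<^sub>m n n :: complex mat) $$ (0, 0)" by simp
  then show False using assms by simp
qed

lemma norm_le_induced_norm: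
  fixes nrm :: "complex mat \<Rightarrow> real" and T :: "complex mat \<Rightarrow> complex mat"
  assumes bdd: "bdd_above {nrm (T X) / nrm X | X. X \<in> carrier_mat n n \<and> X \<noteq> 0\<^sub>m n n}"
    and X: "X \<in> carrier_mat n n" "X \<noteq> 0\<^sub>m n n" and pos: "0 < nrm X"
  shows "nrm (T X) \<le> induced_norm n nrm T * nrm X"
proof -
  have "nrm (T X) / nrm X \<le> induced_norm n nrm T"
    unfolding induced_norm_def by (rule cSup_upper[OF _ bdd]) (use X in blast)
  then show ?thesis using pos by (simp add: divide_le_eq)
qed

lemma induced_norm_le:
  fixes nrm :: "complex mat \<Rightarrow> real" and T :: "complex mat \<Rightarrow> complex mat"
  assumes n: "0 < n"
    and pos: "\<And>X. X \<in> carrier_mat n n \<Longrightarrow> X \<noteq> 0\<^sub>m n n \<Longrightarrow> 0 < nrm X"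
    and le: "\<And>X. X \<in> carrier_mat n n \<Longrightarrow> X \<noteq> 0\<^sub>m n n \<Longrightarrow> nrm (T X) \<le> c * nrm X"
  shows "induced_norm n nrm T \<le> c"
  unfolding induced_norm_def
proof (rule cSup_least)
  show "{nrm (T X) / nrm X | X. X \<in> carrier_mat n n \<and> X \<noteq> 0\<^sub>m n n} \<noteq> {}"
    using one_mat_neq_zero_mat[OF n] one_carrier_mat by blast
next
  fix r assume "r \<in> {nrm (T X) / nrm X | X. X \<in> carrier_mat n n \<and> X \<noteq> 0\<^sub>m n n}"
  then obtain X where X: "X \<in> carrier_mat n n" "X \<noteq> 0\<^sub>m n n" and r: "r = nrm (T X) / nrm X" by blast
  show "r \<le> c" unfolding r using le[OF X] pos[OF X] by (simp add: divide_le_eq)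
qed

lemma induced_norm_nonneg:
  fixes nrm :: "complex mat \<Rightarrow> real" and T :: "complex mat \<Rightarrow> complex mat"
  assumes n: "0 < n" and nonneg: "\<And>X. X \<in> carrier_mat n n \<Longrightarrow> 0 \<le> nrm X"
    and T: "\<And>X. X \<in> carrier_mat n n \<Longrightarrow> T X \<in> carrier_mat n n"
    and bdd: "bdd_above {nrm (T X) / nrm X | X. X \<in> carrier_mat n n \<and> X \<noteq> 0\<^sub>m n n}"
  shows "0 \<le> induced_norm n nrm T"
proof -
  have "0 \<le> nrm (T (1\<^sub>m n)) / nrm (1\<^sub>m n)"
    using nonneg[OF T[OF one_carrier_mat]] nonneg[OF one_carrier_mat] by simp
  also have "\<dots> \<le> induced_norm n nrm T"
    unfolding induced_norm_def
    by (rule cSup_upper[OF _ bdd]) (use one_mat_neq_zero_mat[OF n] one_carrier_mat in blast)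
  finally show ?thesis .
qed

lemma induced_norm_adjoint_le:
  assumes n: "0 < n" and dual: "hs_dual_norms n n1 n2"
    and T: "\<And>X. X \<in> carrier_mat n n \<Longrightarrow> T X \<in> carrier_mat n n" and adj: "is_hs_adjoint n T S"
  shows "induced_norm n n1 S \<le> induced_norm n n2 T"
proof (rule induced_norm_le[OF n hs_dual_norms_pos[OF dual]])
  note dual_sym = hs_dual_norms_commute[OF dual]
  have bdd: "bdd_above {n2 (T X) / n2 X | X. X \<in> carrier_mat n n \<and> X \<noteq> 0\<^sub>m n n}"
    by (rule bdd_above_induced_ratios_of_adjoint[OF dual_sym T adj])
  have M: "0 \<le> induced_norm n n2 T"
    by (rule induced_norm_nonneg[OF n hs_dual_normsD(1)[OF dual_sym] T bdd])
  fix X :: "complex mat" assume X: "X \<in> carrier_mat n n" "X \<noteq> 0\<^sub>m n n"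
  have S: "S X \<in> carrier_mat n n"
    and adj_eq: "\<And>B. B \<in> carrier_mat n n \<Longrightarrow> hs_inner X (T B) = hs_inner (S X) B"
    using adj X(1) unfolding is_hs_adjoint_def by auto
  obtain B where B: "B \<in> carrier_mat n n" "n2 B \<le> 1" "n1 (S X) \<le> cmod (hs_inner B (S X))"
    using hs_dual_normsD(3)[OF dual S] by blast
  show "n1 (S X) \<le> induced_norm n n2 T * n1 X"
  proof (cases "B = 0\<^sub>m n n")
    case True
    then have "n1 (S X) \<le> 0" using B(3) S by (simp add: hs_inner_sum[of _ n n])
    moreover have "0 \<le> induced_norm n n2 T * n1 X" using M hs_dual_normsD(1)[OF dual X(1)] by simp
    ultimately show ?thesis by linarith
  next
    case False
    have "n1 (S X) \<le> cmod (hs_inner X (T B))"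
      using B(3) norm_hs_inner_commute[OF S B(1)] adj_eq[OF B(1)] by simp
    also have "\<dots> \<le> n1 X * n2 (T B)" by (rule hs_dual_normsD(2)[OF dual X(1) T[OF B(1)]])
    also have "\<dots> \<le> n1 X * (induced_norm n n2 T * n2 B)"
      using norm_le_induced_norm[OF bdd B(1) False hs_dual_norms_pos[OF dual_sym B(1) False]]
        hs_dual_normsD(1)[OF dual X(1)] by (rule mult_left_mono)
    also have "\<dots> \<le> n1 X * induced_norm n n2 T"
      using B(2) M hs_dual_normsD(1)[OF dual_sym B(1)] hs_dual_normsD(1)[OF dual X(1)]
      by (intro mult_left_mono mult_left_le) auto
    finally show ?thesis by (simp add: mult.commute)
  qed
qed

theorem induced_norm_adjoint:
  assumes n: "0 < n" and dual: "hs_dual_norms n n1 n2"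
    and T: "\<And>X. X \<in> carrier_mat n n \<Longrightarrow> T X \<in> carrier_mat n n" and adj: "is_hs_adjoint n T S"
  shows "induced_norm n n1 S = induced_norm n n2 T"
proof (rule antisym)
  show "induced_norm n n1 S \<le> induced_norm n n2 T"
    by (rule induced_norm_adjoint_le[OF n dual T adj])
  note dual_sym = hs_dual_norms_commute[OF dual] and adj_sym = is_hs_adjoint_commute[OF T adj]
  have "\<And>X. X \<in> carrier_mat n n \<Longrightarrow> S X \<in> carrier_mat n n"
    using adj unfolding is_hs_adjoint_def by auto
  then show "induced_norm n n2 T \<le> induced_norm n n1 S"
    by (rule induced_norm_adjoint_le[OF n dual_sym _ adj_sym])
qed

lemma hs_dual_norms_schatten_1_op_norm:
  assumes n: "0 < n"
  shows "hs_dual_norms n (schatten_norm 1) op_norm"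
  unfolding hs_dual_norms_def
proof (intro conjI ballI)
  fix A B :: "complex mat" assume A: "A \<in> carrier_mat n n" and B: "B \<in> carrier_mat n n"
  show "cmod (hs_inner A B) \<le> schatten_norm 1 A * op_norm B"
    using norm_hs_inner_le_op_norm_schatten_1[OF A B] norm_hs_inner_commute[OF A B]
    by (simp add: mult.commute)
next
  fix X :: "complex mat" assume X: "X \<in> carrier_mat n n"
  show "0 \<le> schatten_norm 1 X" by (rule schatten_norm_nonneg)
  show "0 \<le> op_norm X" by (rule op_norm_nonneg[OF X n])
  show "\<exists>B\<in>carrier_mat n n. op_norm B \<le> 1 \<and> schatten_norm 1 X \<le> cmod (hs_inner B X)"
    using schatten_norm_1_attained[OF n X] by blast
  show "\<exists>A\<in>carrier_mat n n. schatten_norm 1 A \<le> 1 \<and> op_norm X \<le> cmod (hs_inner A X)"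
    using op_norm_attained[OF n X] by blast
qed

lemma hs_dual_norms_frobenius_norm: "hs_dual_norms n frobenius_norm frobenius_norm"
proof -
  have "\<exists>B\<in>carrier_mat n n. frobenius_norm B \<le> 1 \<and> frobenius_norm X \<le> cmod (hs_inner B X)"
    if "X \<in> carrier_mat n n" for X
    using frobenius_norm_attained[OF that] by blast
  then show ?thesis unfolding hs_dual_norms_def using norm_hs_inner_le_frobenius by auto
qed

lemma hs_dual_norms_schatten_2: "hs_dual_norms n (schatten_norm 2) (schatten_norm 2)"
  using hs_dual_norms_frobenius_norm[of n] unfolding hs_dual_norms_def
  by (simp add: schatten_norm_2_eq_frobenius_norm)

theorem proposition4p2:
  fixes N :: nat and T Tadj :: "complex mat \<Rightarrow> complex mat"
  assumes "N \<ge> 1"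
    and "linear_on_M N T"
    and "\<exists>A\<in>carrier_mat N N. T A \<noteq> 0\<^sub>m N N"
    and "is_hs_adjoint N T Tadj"
  shows "height N T = height N Tadj"
proof -
  have N: "0 < N" using assms(1) by simp
  have T: "\<And>X. X \<in> carrier_mat N N \<Longrightarrow> T X \<in> carrier_mat N N"
    using assms(2) unfolding linear_on_M_def by blast
  note adjoint_induced_norm = induced_norm_adjoint[OF N _ T assms(4)]
  note trace_op_duality = hs_dual_norms_schatten_1_op_norm[OF N]
  have "induced_norm N (schatten_norm 1) Tadj = induced_norm N op_norm T"
    by (rule adjoint_induced_norm[OF trace_op_duality])
  moreover have "induced_norm N op_norm Tadj = induced_norm N (schatten_norm 1) T"
    by (rule adjoint_induced_norm[OF hs_dual_norms_commute[OF trace_op_duality]])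
  moreover have "induced_norm N (schatten_norm 2) Tadj = induced_norm N (schatten_norm 2) T"
    by (rule adjoint_induced_norm[OF hs_dual_norms_schatten_2])
  ultimately show ?thesis unfolding height_def by (simp add: mult.commute)
qed

end
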